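(* Let $n,m,\ell$ be positive integers with $m\le n-1$ and $\ell\le n-1$. Then $$\sum_{j=0}^{n-m-1}\binom{m-\ell+2j}{j}\,\mathcal Y_n\big(2^{\{n-m-j-1\}},1^{\{m-\ell+2j\}}\big)=\frac{1}{n^2}\binom{n}{m}\binom{n}{\ell}.$$
   Context: Let $\zeta_n=e^{2\pi\sqrt{-1}/n}$. For positive integers $s_1,\dots,s_m$, define $\mathfrak Z_n(s_1,\dots,s_m):=\sum_{1\le i_1<\cdots<i_m\le n-1}\prod_{k=1}^{m}(1-\zeta_n^{i_k})^{-s_k}$ (equal to $1$ if $m=0$ and to $0$ if $m>n-1$). Define $\mathcal Y_n(s_1,\dots,s_m):=\sum_{\sigma}\mathfrak Z_n(\sigma)$, where $\sigma$ runs over all distinct rearrangements of $(s_1,\dots,s_m)$; $\mathcal Y_n$ of the empty sequence is $1$. Notation: $a^{\{k\}}$ denotes the block $a,\dots,a$ of length $k$; any $\mathcal Y_n$ term in which some block has negative length is interpreted as $0$. Binomial coefficients $\binom{a}{b}$ are $0$ when $b<0$ or $b>a\ge0$. *)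

theory Defs
  imports Complex_Main "HOL-Combinatorics.Multiset_Permutations"
begin

definition zeta :: "nat \<Rightarrow> complex" where
  "zeta n = exp (2 * of_real pi * \<i> / of_nat n)"

text \<open>Cyclotomic multiple zeta value Z_n(s_1,...,s_m): sum over index sets
  {i_1 < ... < i_m} contained in {1..n-1}, listed increasingly.\<close>
definition frakZ :: "nat \<Rightarrow> nat list \<Rightarrow> complex" where
  "frakZ n s = (\<Sum>I | I \<subseteq> {1..n-1} \<and> card I = length s.
      \<Prod>k<length s. inverse ((1 - zeta n ^ (sorted_list_of_set I ! k)) ^ (s ! k)))"

definition calY :: "nat \<Rightarrow> nat list \<Rightarrow> complex" where
  "calY n s = (\<Sum>\<sigma>\<in>permutations_of_multiset (mset s). frakZ n \<sigma>)"

end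

theory Submission
  imports Defs "HOL-Computational_Algebra.Fundamental_Theorem_Algebra"
begin

(* Let y_i = 1 / (1 - zeta^i) for 0 < i < n.  Evaluating prod_(0<i<n) (w - zeta^i) = 1 + w + ... + w^(n-1)
   at w = 1 + x and at w = 1 gives prod_i (1 + x y_i) = sum_k binom(n, k+1) x^k / n, so the elementary
   symmetric functions are e_k(y) = binom(n, k+1) / n, and the right-hand side is e_a(y) e_b(y) with
   a = n-m-1, b = n-l-1.  In this product y_C y_D = (prod_A y^2)(prod_(I-A) y) for I = C \<union> D, A = C \<inter> D,
   and a pair (I, A) with |A| = p arises from binom(a+b-2p, a-p) pairs (C, D), one for each choice of
   C - D inside I - A.  Summed over all such (I, A) these monomials give Y_n(2^p, 1^(a+b-2p)), since a
   rearrangement of p twos and a+b-2p ones is a choice of the positions A in I that carry a 2.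
   Substituting p = a - j yields the left-hand side. *)

lemma prod_diff_roots_unity:
  assumes n: "n > 0"
  shows "(\<Prod>z | z ^ n = 1. w - z) = w ^ n - (1::complex)"
proof -
  define p :: "complex poly" where "p = monom 1 n - 1"
  have poly_p: "poly p z = z ^ n - 1" for z by (simp add: p_def poly_monom)
  have "pderiv p = monom (of_nat n) (n - 1)" by (simp add: p_def pderiv_diff pderiv_monom)
  hence poly_pderiv_p: "poly (pderiv p) z = of_nat n * z ^ (n - 1)" for z by (simp add: poly_monom)
  have "rsquarefree p"
    unfolding rsquarefree_roots
  proof (intro allI notI)
    fix a assume "poly p a = 0 \<and> poly (pderiv p) a = 0"
    hence "a ^ n = 1" "a ^ (n - 1) = 0" using n by (auto simp: poly_p poly_pderiv_p)
    thus False using n by (simp add: power_0_left)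
  qed
  hence "smult (lead_coeff p) (\<Prod>z | poly p z = 0. [:-z, 1:]) = p"
    by (rule complex_poly_decompose_rsquarefree)
  moreover have "lead_coeff p = 1"
  proof -
    have "degree p = degree (monom (1::complex) n)"
      unfolding p_def using n
      by (subst diff_conv_add_uminus, subst degree_add_eq_left) (simp_all add: degree_monom_eq)
    thus ?thesis using n by (simp add: p_def degree_monom_eq coeff_monom)
  qed
  ultimately have "poly (\<Prod>z | poly p z = 0. [:-z, 1:]) w = poly p w" by simp
  thus ?thesis by (simp add: poly_prod poly_p)
qed

lemma zeta_power: "zeta n ^ k = cis (2 * pi * real k / real n)"
  unfolding zeta_def cis_conv_exp by (simp add: exp_of_nat_mult[symmetric] field_simps)

lemma prod_diff_zeta_powers:
  assumes n: "n > 0"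
  shows "(\<Prod>k<n. w - zeta n ^ k) = w ^ n - (1::complex)"
proof -
  have "(\<Prod>k<n. w - zeta n ^ k) = (\<Prod>k<n. w - cis (2 * pi * real k / real n))"
    by (simp add: zeta_power)
  also have "\<dots> = (\<Prod>z | z ^ n = 1. w - z)"
    by (rule prod.reindex_bij_betw[OF bij_betw_roots_unity[OF n]])
  also have "\<dots> = w ^ n - 1" by (rule prod_diff_roots_unity[OF n])
  finally show ?thesis .
qed

lemma prod_diff_nontrivial_zeta_powers:
  assumes n: "n > 0"
  shows "(\<Prod>k\<in>{1..n-1}. w - zeta n ^ k) = (\<Sum>k<n. w ^ k)"
proof -
  define P where "P = (\<lambda>w. \<Prod>k\<in>{1..n-1}. w - zeta n ^ k)"
  define Q where "Q = (\<lambda>w::complex. \<Sum>k<n. w ^ k)"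
  have "{..<n} = insert 0 {1..n-1}" using n by auto
  hence "(w - 1) * P w = (w - 1) * Q w" for w
    using prod_diff_zeta_powers[OF n, of w] by (simp add: P_def Q_def power_diff_1_eq)
  hence PQ: "P w = Q w" if "w \<noteq> 1" for w using that by auto
  have "(P \<longlongrightarrow> P 1) (at 1)" unfolding P_def by (intro tendsto_intros)
  moreover have "(P \<longlongrightarrow> Q 1) (at 1)"
  proof (rule Lim_transform_eventually)
    show "(Q \<longlongrightarrow> Q 1) (at 1)" unfolding Q_def by (intro tendsto_intros)
    show "\<forall>\<^sub>F x in at 1. Q x = P x" by (auto simp: eventually_at_filter PQ)
  qed
  ultimately have "P 1 = Q 1" by (rule tendsto_unique[rotated]) simp
  with PQ have "P w = Q w" by (cases "w = 1") auto
  thus ?thesis by (simp add: P_def Q_def)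
qed

lemma sum_powers_one_plus:
  "(\<Sum>k<n. (1 + x) ^ k) = (\<Sum>k<n. of_nat (n choose Suc k) * (x::'a::comm_semiring_1) ^ k)"
proof (induction n)
  case (Suc n)
  have "(\<Sum>k<Suc n. (1 + x) ^ k) = (\<Sum>k<n. of_nat (n choose Suc k) * x ^ k) + (1 + x) ^ n"
    using Suc by simp
  also have "(\<Sum>k<n. of_nat (n choose Suc k) * x ^ k) = (\<Sum>k<Suc n. of_nat (n choose Suc k) * x ^ k)"
    by (simp add: binomial_eq_0)
  also have "(1 + x) ^ n = (\<Sum>k<Suc n. of_nat (n choose k) * x ^ k)"
    by (subst add.commute, subst binomial_ring) (simp add: lessThan_Suc_atMost)
  also have "(\<Sum>k<Suc n. of_nat (n choose Suc k) * x ^ k) + \<dots> = (\<Sum>k<Suc n. of_nat (Suc n choose Suc k) * x ^ k)"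
    by (simp add: sum.distrib[symmetric] algebra_simps)
  finally show ?case .
qed simp

definition esym :: "'a set \<Rightarrow> ('a \<Rightarrow> 'b::comm_semiring_1) \<Rightarrow> nat \<Rightarrow> 'b" where
  "esym S g k = (\<Sum>C | C \<subseteq> S \<and> card C = k. \<Prod>i\<in>C. g i)"

lemma prod_one_plus_eq_sum_esym:
  assumes "finite S"
  shows "(\<Prod>i\<in>S. 1 + x * g i) = (\<Sum>k\<le>card S. esym S g k * x ^ k)"
proof -
  have "(\<Prod>i\<in>S. 1 + x * g i) = (\<Prod>i\<in>S. x * g i + 1)" by (simp add: add.commute)
  also have "\<dots> = (\<Sum>C\<in>Pow S. (\<Prod>i\<in>C. g i) * x ^ card C)"
    using assms by (simp add: prod_add prod.distrib mult.commute)
  also have "\<dots> = (\<Sum>k\<le>card S. \<Sum>C | C \<in> Pow S \<and> card C = k. (\<Prod>i\<in>C. g i) * x ^ card C)"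
    by (rule sum.group[symmetric]) (use assms in \<open>auto intro: card_mono\<close>)
  also have "\<dots> = (\<Sum>k\<le>card S. esym S g k * x ^ k)"
    by (intro sum.cong refl) (auto simp: esym_def sum_distrib_right)
  finally show ?thesis .
qed

definition inv_one_minus_zeta :: "nat \<Rightarrow> nat \<Rightarrow> complex" where
  "inv_one_minus_zeta n i = inverse (1 - zeta n ^ i)"

lemma esym_inv_one_minus_zeta:
  assumes n: "n > 0" and k: "k \<le> n - 1"
  shows "esym {1..n-1} (inv_one_minus_zeta n) k = of_nat (n choose Suc k) / of_nat n"
proof -
  have prod_one_minus_zeta: "(\<Prod>i\<in>{1..n-1}. 1 - zeta n ^ i) = of_nat n"
    using prod_diff_nontrivial_zeta_powers[OF n, of 1] by simp
  hence nonzero: "1 - zeta n ^ i \<noteq> 0" if "i \<in> {1..n-1}" for i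
    using n that by (metis finite_atLeastAtMost of_nat_0_eq_iff prod_zero_iff less_irrefl)
  have "(\<Prod>i\<in>{1..n-1}. 1 + x * inv_one_minus_zeta n i)
      = (\<Sum>k\<le>n-1. of_nat (n choose Suc k) / of_nat n * x ^ k)" for x
  proof -
    have "(\<Prod>i\<in>{1..n-1}. 1 + x * inv_one_minus_zeta n i)
        = (\<Prod>i\<in>{1..n-1}. ((1 + x) - zeta n ^ i) / (1 - zeta n ^ i))"
      by (intro prod.cong refl) (use nonzero in \<open>auto simp: inv_one_minus_zeta_def field_simps\<close>)
    also have "\<dots> = (\<Sum>k<n. (1 + x) ^ k) / of_nat n"
      by (simp only: prod_dividef prod_diff_nontrivial_zeta_powers[OF n]) simp
    also have "\<dots> = (\<Sum>k<n. of_nat (n choose Suc k) / of_nat n * x ^ k)"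
      by (simp add: sum_powers_one_plus sum_divide_distrib)
    also have "{..<n} = {..n-1}" using n by auto
    finally show ?thesis .
  qed
  hence "\<forall>x. (\<Sum>k\<le>n-1. esym {1..n-1} (inv_one_minus_zeta n) k * x ^ k)
           = (\<Sum>k\<le>n-1. of_nat (n choose Suc k) / of_nat n * x ^ k)"
    by (simp add: prod_one_plus_eq_sum_esym)
  thus ?thesis using k by (subst (asm) polyfun_eq_coeffs) blast
qed

lemma image_mset_indicator_mset_set:
  assumes "finite I" "A \<subseteq> I"
  shows "image_mset (\<lambda>i. if i \<in> A then u else v) (mset_set I)
           = replicate_mset (card A) u + replicate_mset (card (I - A)) v"
proof -
  have "finite A" using assms finite_subset by blast
  have "mset_set I = mset_set A + mset_set (I - A)"
    using assms \<open>finite A\<close> by (metis Diff_disjoint Diff_partition finite_Diff mset_set_Union)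
  moreover have "image_mset (\<lambda>i. if i \<in> A then u else v) (mset_set A) = image_mset (\<lambda>_. u) (mset_set A)"
    by (rule image_mset_cong) (use \<open>finite A\<close> in auto)
  moreover have "image_mset (\<lambda>i. if i \<in> A then u else v) (mset_set (I - A)) = image_mset (\<lambda>_. v) (mset_set (I - A))"
    by (rule image_mset_cong) (use assms in auto)
  ultimately show ?thesis using assms \<open>finite A\<close> by (simp add: image_mset_const_eq)
qed

lemma mset_map_indicator:
  assumes "distinct L" "A \<subseteq> set L"
  shows "mset (map (\<lambda>x. if x \<in> A then u else v) L)
           = replicate_mset (card A) u + replicate_mset (card (set L - A)) v"
  using image_mset_indicator_mset_set[OF finite_set assms(2)] assms(1) by (simp add: mset_set_set)

lemma positions_map_indicator:
  assumes "A \<subseteq> set L" "u \<noteq> v"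
  shows "{L ! k | k. k < length L \<and> map (\<lambda>x. if x \<in> A then u else v) L ! k = u} = A"
proof -
  have "{L ! k | k. k < length L \<and> map (\<lambda>x. if x \<in> A then u else v) L ! k = u}
      = {L ! k | k. k < length L \<and> L ! k \<in> A}"
    using assms(2) by (auto split: if_splits)
  also have "\<dots> = A" using assms(1) by (fastforce simp: in_set_conv_nth)
  finally show ?thesis .
qed

lemma map_indicator_positions:
  assumes "distinct L" "length \<sigma> = length L" "set \<sigma> \<subseteq> {u, v}"
  shows "map (\<lambda>x. if x \<in> {L ! k | k. k < length L \<and> \<sigma> ! k = u} then u else v) L = \<sigma>"
proof (rule nth_equalityI)
  fix k assume "k < length (map (\<lambda>x. if x \<in> {L ! k | k. k < length L \<and> \<sigma> ! k = u} then u else v) L)"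
  hence k: "k < length L" by simp
  have "\<sigma> ! k \<in> {u, v}" using assms k by (metis nth_mem subsetD)
  moreover have "L ! k \<in> {L ! k | k. k < length L \<and> \<sigma> ! k = u} \<longleftrightarrow> \<sigma> ! k = u"
    using assms(1) k by (auto simp: nth_eq_iff_index_eq)
  ultimately show "map (\<lambda>x. if x \<in> {L ! k | k. k < length L \<and> \<sigma> ! k = u} then u else v) L ! k = \<sigma> ! k"
    using k by auto
qed (use assms in simp)

lemma bij_betw_subsets_permutations_two_one:
  assumes L: "distinct L" "length L = p + q"
  shows "bij_betw (\<lambda>A. map (\<lambda>x. if x \<in> A then 2 else 1) L) {A. A \<subseteq> set L \<and> card A = p}
           (permutations_of_multiset (mset (replicate p 2 @ replicate q (1::nat))))"
proof (rule bij_betw_byWitness[where f' = "\<lambda>\<sigma>. {L ! k | k. k < length L \<and> \<sigma> ! k = 2}"])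
  define M where "M = mset (replicate p 2 @ replicate q (1::nat))"
  have perm: "length \<sigma> = length L" "set \<sigma> \<subseteq> {2, 1}" if "\<sigma> \<in> permutations_of_multiset M" for \<sigma>
  proof -
    from that have "mset \<sigma> = M" by (simp add: permutations_of_multiset_def)
    from arg_cong[OF this, of size] arg_cong[OF this, of set_mset]
    show "length \<sigma> = length L" "set \<sigma> \<subseteq> {2, 1}" using L by (auto simp: M_def)
  qed
  show "\<forall>A\<in>{A. A \<subseteq> set L \<and> card A = p}.
          {L ! k | k. k < length L \<and> map (\<lambda>x. if x \<in> A then 2 else 1::nat) L ! k = 2} = A"
    by (simp add: positions_map_indicator)
  show inverse: "\<forall>\<sigma>\<in>permutations_of_multiset M.
          map (\<lambda>x. if x \<in> {L ! k | k. k < length L \<and> \<sigma> ! k = 2} then 2 else 1) L = \<sigma>"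
    using perm L(1) by (blast intro: map_indicator_positions)
  show "(\<lambda>A. map (\<lambda>x. if x \<in> A then 2 else 1) L) ` {A. A \<subseteq> set L \<and> card A = p}
          \<subseteq> permutations_of_multiset M"
  proof (rule image_subsetI)
    fix A assume "A \<in> {A. A \<subseteq> set L \<and> card A = p}"
    hence A: "A \<subseteq> set L" "card A = p" by simp_all
    hence "card (set L - A) = q" using L by (simp add: card_Diff_subset distinct_card finite_subset)
    thus "map (\<lambda>x. if x \<in> A then 2 else 1) L \<in> permutations_of_multiset M"
      using mset_map_indicator[OF L(1) A(1), of "2::nat" 1]
      by (simp add: permutations_of_multiset_def M_def A)
  qed
  show "(\<lambda>\<sigma>. {L ! k | k. k < length L \<and> \<sigma> ! k = 2}) ` permutations_of_multiset M
          \<subseteq> {A. A \<subseteq> set L \<and> card A = p}"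
  proof (rule image_subsetI)
    fix \<sigma> assume "\<sigma> \<in> permutations_of_multiset M"
    define A where "A = {L ! k | k. k < length L \<and> \<sigma> ! k = 2}"
    have "A \<subseteq> set L" by (auto simp: A_def)
    moreover have "mset (map (\<lambda>x. if x \<in> A then 2 else 1) L) = M"
      using inverse \<open>\<sigma> \<in> permutations_of_multiset M\<close> by (simp add: A_def permutations_of_multiset_def)
    ultimately have "replicate_mset (card A) 2 + replicate_mset (card (set L - A)) 1 = M"
      using mset_map_indicator[OF L(1), of A "2::nat" 1] by simp
    from arg_cong[OF this, of "\<lambda>M. count M 2"] \<open>A \<subseteq> set L\<close>
    show "A \<in> {A. A \<subseteq> set L \<and> card A = p}" by (simp add: M_def)
  qed
qed

lemma sum_permutations_two_one:
  fixes g :: "'a::linorder \<Rightarrow> 'b::comm_semiring_1"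
  assumes "finite I" "card I = p + q"
  shows "(\<Sum>\<sigma>\<in>permutations_of_multiset (mset (replicate p 2 @ replicate q (1::nat))).
            \<Prod>k<p+q. g (sorted_list_of_set I ! k) ^ (\<sigma> ! k))
       = (\<Sum>A | A \<subseteq> I \<and> card A = p. (\<Prod>i\<in>A. g i ^ 2) * (\<Prod>i\<in>I - A. g i))"
proof -
  define L where "L = sorted_list_of_set I"
  have L: "distinct L" "length L = p + q" "set L = I" using assms by (simp_all add: L_def)
  have "(\<Sum>\<sigma>\<in>permutations_of_multiset (mset (replicate p 2 @ replicate q (1::nat))).
            \<Prod>k<p+q. g (L ! k) ^ (\<sigma> ! k))
      = (\<Sum>A | A \<subseteq> I \<and> card A = p. \<Prod>k<p+q. g (L ! k) ^ (map (\<lambda>x. if x \<in> A then 2 else 1) L ! k))"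
    using sum.reindex_bij_betw[OF bij_betw_subsets_permutations_two_one[OF L(1,2)],
        of "\<lambda>\<sigma>. \<Prod>k<p+q. g (L ! k) ^ (\<sigma> ! k)", symmetric] L(3)
    by simp
  also have "\<dots> = (\<Sum>A | A \<subseteq> I \<and> card A = p. (\<Prod>i\<in>A. g i ^ 2) * (\<Prod>i\<in>I - A. g i))"
  proof (intro sum.cong refl)
    fix A assume A: "A \<in> {A. A \<subseteq> I \<and> card A = p}"
    have "(\<Prod>k<p+q. g (L ! k) ^ (map (\<lambda>x. if x \<in> A then 2 else 1) L ! k))
        = (\<Prod>k<p+q. (\<lambda>x. if x \<in> A then g x ^ 2 else g x) (L ! k))"
      by (intro prod.cong refl) (simp add: L)
    also have "\<dots> = (\<Prod>x\<in>I. if x \<in> A then g x ^ 2 else g x)"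
      by (rule prod.reindex_bij_betw[OF bij_betw_nth]) (use L in auto)
    also have "\<dots> = (\<Prod>i\<in>A. g i ^ 2) * (\<Prod>i\<in>I - A. g i)"
      using A assms(1) by (simp add: prod.If_cases Int_absorb1 Diff_eq)
    finally show "(\<Prod>k<p+q. g (L ! k) ^ (map (\<lambda>x. if x \<in> A then 2 else 1) L ! k))
        = (\<Prod>i\<in>A. g i ^ 2) * (\<Prod>i\<in>I - A. g i)" .
  qed
  finally show ?thesis by (simp add: L_def)
qed

definition monomial_sym_two_one :: "'a set \<Rightarrow> ('a \<Rightarrow> 'b::comm_semiring_1) \<Rightarrow> nat \<Rightarrow> nat \<Rightarrow> 'b" where
  "monomial_sym_two_one S g p q = (\<Sum>I | I \<subseteq> S \<and> card I = p + q.
      \<Sum>A | A \<subseteq> I \<and> card A = p. (\<Prod>i\<in>A. g i ^ 2) * (\<Prod>i\<in>I - A. g i))"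

lemma calY_replicate_two_one:
  "calY n (replicate p 2 @ replicate q 1) = monomial_sym_two_one {1..n-1} (inv_one_minus_zeta n) p q"
proof -
  define P where "P = permutations_of_multiset (mset (replicate p 2 @ replicate q (1::nat)))"
  have "calY n (replicate p 2 @ replicate q 1) = (\<Sum>\<sigma>\<in>P. \<Sum>I | I \<subseteq> {1..n-1} \<and> card I = p + q.
           \<Prod>k<p+q. inv_one_minus_zeta n (sorted_list_of_set I ! k) ^ (\<sigma> ! k))"
  proof (unfold calY_def P_def[symmetric], intro sum.cong refl)
    fix \<sigma> assume "\<sigma> \<in> P"
    hence "mset \<sigma> = mset (replicate p 2 @ replicate q (1::nat))"
      by (simp add: P_def permutations_of_multiset_def)
    hence length: "length \<sigma> = p + q" by (metis length_append length_replicate size_mset)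
    show "frakZ n \<sigma> = (\<Sum>I | I \<subseteq> {1..n-1} \<and> card I = p + q.
            \<Prod>k<p+q. inv_one_minus_zeta n (sorted_list_of_set I ! k) ^ (\<sigma> ! k))"
      unfolding frakZ_def length by (simp add: inv_one_minus_zeta_def power_inverse)
  qed
  also have "\<dots> = (\<Sum>I | I \<subseteq> {1..n-1} \<and> card I = p + q. \<Sum>\<sigma>\<in>P.
           \<Prod>k<p+q. inv_one_minus_zeta n (sorted_list_of_set I ! k) ^ (\<sigma> ! k))"
    by (rule sum.swap)
  also have "\<dots> = monomial_sym_two_one {1..n-1} (inv_one_minus_zeta n) p q"
    unfolding monomial_sym_two_one_def P_def
    by (intro sum.cong refl sum_permutations_two_one) (auto intro: finite_subset)
  finally show ?thesis .
qed

lemma prod_mult_prod_Un_Int: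
  fixes g :: "'a \<Rightarrow> 'b::comm_monoid_mult"
  assumes "finite C" "finite D"
  shows "(\<Prod>i\<in>C. g i) * (\<Prod>i\<in>D. g i) = (\<Prod>i\<in>C \<inter> D. g i ^ 2) * (\<Prod>i\<in>(C \<union> D) - (C \<inter> D). g i)"
proof -
  have "(\<Prod>i\<in>C \<union> D. g i) = (\<Prod>i\<in>(C \<union> D) - (C \<inter> D). g i) * (\<Prod>i\<in>C \<inter> D. g i)"
    by (rule prod.subset_diff) (use assms in auto)
  with prod.union_inter[OF assms, of g, symmetric] show ?thesis
    by (simp add: power2_eq_square prod.distrib mult_ac)
qed

lemma card_pairs_with_Un_Int:
  assumes I: "finite I" "A \<subseteq> I" and card: "card A \<le> a" "card I + card A = a + b"
  shows "card {(C, D). card C = a \<and> card D = b \<and> C \<union> D = I \<and> C \<inter> D = A}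
           = (card I - card A) choose (a - card A)"
proof -
  have "finite A" using I finite_subset by blast
  have "bij_betw (\<lambda>E. (A \<union> E, I - E)) {E. E \<subseteq> I - A \<and> card E = a - card A}
          {(C, D). card C = a \<and> card D = b \<and> C \<union> D = I \<and> C \<inter> D = A}"
  proof (rule bij_betw_byWitness[where f' = "\<lambda>(C, D). C - D"])
    show "\<forall>E\<in>{E. E \<subseteq> I - A \<and> card E = a - card A}. (\<lambda>(C, D). C - D) (A \<union> E, I - E) = E"
      using I by auto
    show "\<forall>x\<in>{(C, D). card C = a \<and> card D = b \<and> C \<union> D = I \<and> C \<inter> D = A}.
            (\<lambda>E. (A \<union> E, I - E)) ((\<lambda>(C, D). C - D) x) = x"
      by auto
    show "(\<lambda>E. (A \<union> E, I - E)) ` {E. E \<subseteq> I - A \<and> card E = a - card A}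
            \<subseteq> {(C, D). card C = a \<and> card D = b \<and> C \<union> D = I \<and> C \<inter> D = A}"
    proof (rule image_subsetI)
      fix E assume E: "E \<in> {E. E \<subseteq> I - A \<and> card E = a - card A}"
      hence "finite E" using I finite_subset by blast
      have "card (A \<union> E) = a"
        using E card \<open>finite A\<close> \<open>finite E\<close> by (subst card_Un_disjoint) auto
      moreover have "card (I - E) = b"
        using E card \<open>finite E\<close> by (subst card_Diff_subset) auto
      ultimately show "(A \<union> E, I - E) \<in> {(C, D). card C = a \<and> card D = b \<and> C \<union> D = I \<and> C \<inter> D = A}"
        using E I by auto
    qed
    show "(\<lambda>(C, D). C - D) ` {(C, D). card C = a \<and> card D = b \<and> C \<union> D = I \<and> C \<inter> D = A}
            \<subseteq> {E. E \<subseteq> I - A \<and> card E = a - card A}"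
      using I(1) by (auto simp: card_Diff_subset_Int)
  qed
  hence "card {(C, D). card C = a \<and> card D = b \<and> C \<union> D = I \<and> C \<inter> D = A}
           = card {E. E \<subseteq> I - A \<and> card E = a - card A}"
    by (simp add: bij_betw_same_card)
  also have "\<dots> = card (I - A) choose (a - card A)" using I by (intro n_subsets) simp
  finally show ?thesis using I \<open>finite A\<close> by (simp add: card_Diff_subset)
qed

lemma sum_pairs_Un_Int_by_fibers:
  fixes h :: "'a set \<Rightarrow> 'a set \<Rightarrow> 'b::comm_semiring_1"
  assumes S: "finite S"
  shows "(\<Sum>(C, D)\<in>{C. C \<subseteq> S \<and> card C = a} \<times> {D. D \<subseteq> S \<and> card D = b}. h (C \<union> D) (C \<inter> D))
       = (\<Sum>(I, A)\<in>{(I, A). I \<subseteq> S \<and> A \<subseteq> I \<and> card A \<le> min a b \<and> card I + card A = a + b}.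
            of_nat ((card I - card A) choose (a - card A)) * h I A)"
proof -
  define X where "X = {C. C \<subseteq> S \<and> card C = a} \<times> {D. D \<subseteq> S \<and> card D = b}"
  define Y where "Y = {(I, A). I \<subseteq> S \<and> A \<subseteq> I \<and> card A \<le> min a b \<and> card I + card A = a + b}"
  define f where "f = (\<lambda>(C, D). (C \<union> D, C \<inter> D :: 'a set))"
  have "finite X" unfolding X_def by (rule finite_subset[of _ "Pow S \<times> Pow S"]) (use S in auto)
  have "finite Y" unfolding Y_def by (rule finite_subset[of _ "Pow S \<times> Pow S"]) (use S in auto)
  have "f ` X \<subseteq> Y"
  proof (rule image_subsetI)
    fix x assume "x \<in> X"
    then obtain C D where x: "x = (C, D)" "C \<subseteq> S" "D \<subseteq> S" "card C = a" "card D = b"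
      by (auto simp: X_def)
    have "finite C" "finite D" using S x(2,3) by (simp_all add: finite_subset)
    hence "card (C \<inter> D) \<le> card C" "card (C \<inter> D) \<le> card D"
      and "card (C \<union> D) + card (C \<inter> D) = card C + card D"
      by (simp_all add: card_mono card_Un_Int[symmetric])
    thus "f x \<in> Y" using x by (auto simp: Y_def f_def)
  qed
  have fiber: "(\<Sum>x | x \<in> X \<and> f x = y. case_prod h (f x))
      = (case y of (I, A) \<Rightarrow> of_nat ((card I - card A) choose (a - card A)) * h I A)" if "y \<in> Y" for y
  proof -
    from \<open>y \<in> Y\<close> obtain I A
      where y: "y = (I, A)" and IA: "I \<subseteq> S" "A \<subseteq> I" "card A \<le> a" "card I + card A = a + b"
      by (auto simp: Y_def)
    have "{x. x \<in> X \<and> f x = y} = {(C, D). card C = a \<and> card D = b \<and> C \<union> D = I \<and> C \<inter> D = A}"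
      using IA by (auto simp: X_def f_def y)
    moreover have "finite I" using S IA finite_subset by blast
    ultimately have "card {x. x \<in> X \<and> f x = y} = (card I - card A) choose (a - card A)"
      using IA card_pairs_with_Un_Int[of I A a b] by simp
    moreover have "(\<Sum>x | x \<in> X \<and> f x = y. case_prod h (f x)) = of_nat (card {x. x \<in> X \<and> f x = y}) * h I A"
      by (simp add: y)
    ultimately show ?thesis by (simp add: y)
  qed
  have "(\<Sum>(C, D)\<in>X. h (C \<union> D) (C \<inter> D)) = (\<Sum>x\<in>X. case_prod h (f x))"
    by (simp add: f_def case_prod_unfold)
  also have "\<dots> = (\<Sum>y\<in>Y. \<Sum>x | x \<in> X \<and> f x = y. case_prod h (f x))"
    by (rule sum.group[OF \<open>finite X\<close> \<open>finite Y\<close> \<open>f ` X \<subseteq> Y\<close>, symmetric])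
  finally show ?thesis using fiber by (simp add: X_def Y_def)
qed

lemma sum_pairs_Un_Int:
  fixes h :: "'a set \<Rightarrow> 'a set \<Rightarrow> 'b::comm_semiring_1"
  assumes S: "finite S"
  shows "(\<Sum>(C, D)\<in>{C. C \<subseteq> S \<and> card C = a} \<times> {D. D \<subseteq> S \<and> card D = b}. h (C \<union> D) (C \<inter> D))
       = (\<Sum>p\<le>min a b. of_nat ((a + b - 2 * p) choose (a - p)) *
            (\<Sum>I | I \<subseteq> S \<and> card I = p + (a + b - 2 * p). \<Sum>A | A \<subseteq> I \<and> card A = p. h I A))"
proof -
  define Y where "Y = {(I, A). I \<subseteq> S \<and> A \<subseteq> I \<and> card A \<le> min a b \<and> card I + card A = a + b}"
  define c where "c = (\<lambda>(I, A). of_nat ((card I - card A) choose (a - card A)) * h I A)"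
  have "finite Y" unfolding Y_def by (rule finite_subset[of _ "Pow S \<times> Pow S"]) (use S in auto)
  have "(\<Sum>y\<in>Y. c y) = (\<Sum>p\<le>min a b. \<Sum>y | y \<in> Y \<and> card (snd y) = p. c y)"
    by (rule sum.group[symmetric, OF \<open>finite Y\<close>]) (auto simp: Y_def)
  also have "\<dots> = (\<Sum>p\<le>min a b. of_nat ((a + b - 2 * p) choose (a - p)) *
            (\<Sum>I | I \<subseteq> S \<and> card I = p + (a + b - 2 * p). \<Sum>A | A \<subseteq> I \<and> card A = p. h I A))"
  proof (intro sum.cong refl)
    fix p assume "p \<in> {..min a b}"
    hence "{y \<in> Y. card (snd y) = p}
        = Sigma {I. I \<subseteq> S \<and> card I = p + (a + b - 2 * p)} (\<lambda>I. {A. A \<subseteq> I \<and> card A = p})"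
      by (auto simp: Y_def)
    moreover have "finite {I. I \<subseteq> S \<and> card I = p + (a + b - 2 * p)}" using S by simp
    moreover have "finite {A. A \<subseteq> I \<and> card A = p}" if "I \<subseteq> S" for I
      using finite_subset[OF that S] by simp
    ultimately show "(\<Sum>y | y \<in> Y \<and> card (snd y) = p. c y) = of_nat ((a + b - 2 * p) choose (a - p)) *
            (\<Sum>I | I \<subseteq> S \<and> card I = p + (a + b - 2 * p). \<Sum>A | A \<subseteq> I \<and> card A = p. h I A)"
      by (simp add: sum.Sigma[symmetric] sum_distrib_left c_def)
  qed
  finally show ?thesis using sum_pairs_Un_Int_by_fibers[OF S, of h a b] by (simp add: Y_def c_def)
qed

lemma esym_mult_esym:
  assumes "finite S"
  shows "esym S g a * esym S g b
       = (\<Sum>p\<le>min a b. of_nat ((a + b - 2 * p) choose (a - p)) * monomial_sym_two_one S g p (a + b - 2 * p))"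
proof -
  have "esym S g a * esym S g b
      = (\<Sum>(C, D)\<in>{C. C \<subseteq> S \<and> card C = a} \<times> {D. D \<subseteq> S \<and> card D = b}. (\<Prod>i\<in>C. g i) * (\<Prod>i\<in>D. g i))"
    by (simp add: esym_def sum_product sum.cartesian_product)
  also have "\<dots> = (\<Sum>(C, D)\<in>{C. C \<subseteq> S \<and> card C = a} \<times> {D. D \<subseteq> S \<and> card D = b}.
                     (\<Prod>i\<in>C \<inter> D. g i ^ 2) * (\<Prod>i\<in>(C \<union> D) - (C \<inter> D). g i))"
    using assms by (intro sum.cong refl) (auto simp: prod_mult_prod_Un_Int finite_subset)
  also have "\<dots> = (\<Sum>p\<le>min a b. of_nat ((a + b - 2 * p) choose (a - p)) * monomial_sym_two_one S g p (a + b - 2 * p))"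
    using sum_pairs_Un_Int[OF assms, of "\<lambda>I A. (\<Prod>i\<in>A. g i ^ 2) * (\<Prod>i\<in>I - A. g i)"]
    by (simp add: monomial_sym_two_one_def)
  finally show ?thesis .
qed

lemma sum_reflected_binomial_index:
  fixes f :: "nat \<Rightarrow> nat \<Rightarrow> 'b::comm_semiring_1"
  shows "(\<Sum>j=0..a. let k = int b - int a + 2 * int j in
            if k < 0 then 0 else of_nat (nat k choose j) * f (a - j) (nat k))
       = (\<Sum>p\<le>min a b. of_nat ((a + b - 2 * p) choose (a - p)) * f p (a + b - 2 * p))"
proof -
  have summand: "(let k = int b - int a + 2 * int (a - p) in
                 if k < 0 then 0 else of_nat (nat k choose (a - p)) * f p (nat k))
            = (if p \<le> b then of_nat ((a + b - 2 * p) choose (a - p)) * f p (a + b - 2 * p) else 0)"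
    if "p \<le> a" for p
  proof (cases "p \<le> b")
    case True
    hence "nat (int b - int a + 2 * int (a - p)) = a + b - 2 * p" using that by linarith
    thus ?thesis using True that by (simp add: Let_def)
  next
    case False
    hence "int b - int a + 2 * int (a - p) < 0 \<or> nat (int b - int a + 2 * int (a - p)) < a - p"
      using that by linarith
    thus ?thesis using False by (auto simp: Let_def binomial_eq_0)
  qed
  have "(\<Sum>j=0..a. let k = int b - int a + 2 * int j in
            if k < 0 then 0 else of_nat (nat k choose j) * f (a - j) (nat k))
      = (\<Sum>p=0..a. let k = int b - int a + 2 * int (a - p) in
            if k < 0 then 0 else of_nat (nat k choose (a - p)) * f p (nat k))"
    by (rule sum.reindex_bij_witness[of _ "\<lambda>j. a - j" "\<lambda>j. a - j"]) (auto simp: Let_def)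
  also have "\<dots> = (\<Sum>p=0..a. if p \<le> b then of_nat ((a + b - 2 * p) choose (a - p)) * f p (a + b - 2 * p) else 0)"
    by (intro sum.cong refl summand) simp
  also have "\<dots> = (\<Sum>p\<le>min a b. of_nat ((a + b - 2 * p) choose (a - p)) * f p (a + b - 2 * p))"
    by (simp add: sum.If_cases) (intro sum.cong; auto)
  finally show ?thesis .
qed

theorem theorem7:
  fixes n m l :: nat
  assumes "0 < n" "0 < m" "0 < l" "m \<le> n - 1" "l \<le> n - 1"
  shows "(\<Sum>j=0..n-m-1.
            (let k = int m - int l + 2 * int j in
              if k < 0 then 0
              else of_nat (nat k choose j) *
                   calY n (replicate (n - m - j - 1) 2 @ replicate (nat k) 1)))
         = (1 / (of_nat n)^2) * of_nat (n choose m) * of_nat (n choose l)"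
proof -
  define a where "a = n - m - 1"
  define b where "b = n - l - 1"
  define y where "y = inv_one_minus_zeta n"
  have "int m - int l = int b - int a" "\<And>j. n - m - j - 1 = a - j"
    using assms by (auto simp: a_def b_def)
  hence "(\<Sum>j=0..n-m-1.
            (let k = int m - int l + 2 * int j in
              if k < 0 then 0
              else of_nat (nat k choose j) *
                   calY n (replicate (n - m - j - 1) 2 @ replicate (nat k) 1)))
      = (\<Sum>j=0..a. let k = int b - int a + 2 * int j in
            if k < 0 then 0 else of_nat (nat k choose j) * calY n (replicate (a - j) 2 @ replicate (nat k) 1))"
    by (simp only: a_def)
  also have "\<dots> = (\<Sum>p\<le>min a b. of_nat ((a + b - 2 * p) choose (a - p)) *
                     calY n (replicate p 2 @ replicate (a + b - 2 * p) 1))"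
    by (rule sum_reflected_binomial_index)
  also have "\<dots> = esym {1..n-1} y a * esym {1..n-1} y b"
    by (simp only: esym_mult_esym[OF finite_atLeastAtMost] calY_replicate_two_one y_def)
  also have "\<dots> = (of_nat (n choose Suc a) / of_nat n) * (of_nat (n choose Suc b) / of_nat n)"
    using esym_inv_one_minus_zeta[OF \<open>0 < n\<close>] by (simp add: y_def a_def b_def)
  finally show ?thesis
    using assms binomial_symmetric[of m n] binomial_symmetric[of l n]
    by (simp add: a_def b_def Suc_diff_Suc power2_eq_square)
qed

end
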